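(* For $n\ge2$ and $\theta=(\theta_{ij})_{1\le i,j\le n-1}\in\mathbb{R}^{(n-1)^2}$ let $$\Phi(\theta)=\binom n2^{-2}\Big(\sum_{\substack{i>\ell\\ j>k}}\cos(\theta_{ij}-\theta_{ik}-\theta_{\ell j}+\theta_{\ell k})+\sum_{\substack{i>\ell\\ j}}\cos(\theta_{ij}-\theta_{\ell j})+\sum_{\substack{j>k\\ i}}\cos(\theta_{ij}-\theta_{ik})+\sum_{i,j}\cos\theta_{ij}\Big),$$ where all indices $i,\ell,j,k$ range over $\{1,\dots,n-1\}$. There exist $n_0,q_0$ such that for all integers $n\ge n_0$, $q\ge q_0$ and every $\theta\in[-\pi,\pi]^{(n-1)^2}$ with $\|\theta\|_\infty>1/\sqrt q$, $$\Phi(\theta)\le1-\frac1{400n^2q}.$$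
   Context: $\Phi$ is the characteristic function of one increment of the $n\times n$ Diaconis–Gangolli walk, restricted to the first $n-1$ rows and $n-1$ columns. *)

theory Defs
  imports Complex_Main
begin

text \<open>theta is represented as a function nat => nat => real, only the entries
  with indices in {1..<n} (i.e. 1..n-1) are relevant.\<close>

definition DG_Phi :: "nat \<Rightarrow> (nat \<Rightarrow> nat \<Rightarrow> real) \<Rightarrow> real" where
  "DG_Phi n \<theta> =
     (1 / (real (n choose 2))^2) *
     ((\<Sum>i\<in>{1..<n}. \<Sum>l\<in>{1..<i}. \<Sum>j\<in>{1..<n}. \<Sum>k\<in>{1..<j}.
          cos (\<theta> i j - \<theta> i k - \<theta> l j + \<theta> l k))
    + (\<Sum>i\<in>{1..<n}. \<Sum>l\<in>{1..<i}. \<Sum>j\<in>{1..<n}. cos (\<theta> i j - \<theta> l j))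
    + (\<Sum>j\<in>{1..<n}. \<Sum>k\<in>{1..<j}. \<Sum>i\<in>{1..<n}. cos (\<theta> i j - \<theta> i k))
    + (\<Sum>i\<in>{1..<n}. \<Sum>j\<in>{1..<n}. cos (\<theta> i j)))"

end

theory Submission
  imports Defs "HOL-Analysis.Convex"
begin

text \<open>Write every cosine in \<open>\<Phi>\<close> as \<open>1\<close> minus a nonnegative deficit. The four sums have
  \<open>C(n,2)\<^sup>2\<close> terms altogether, so \<open>1 - \<Phi>\<close> is the total deficit divided by \<open>C(n,2)\<^sup>2\<close>.
  Fix an entry \<open>\<theta>\<^sub>i\<^sub>j\<close>. For all \<open>l, k\<close> it splits as
  \<open>(\<theta>\<^sub>i\<^sub>j - \<theta>\<^sub>i\<^sub>k - \<theta>\<^sub>l\<^sub>j + \<theta>\<^sub>l\<^sub>k) + (\<theta>\<^sub>i\<^sub>k - \<theta>\<^sub>l\<^sub>k) + (\<theta>\<^sub>l\<^sub>j - \<theta>\<^sub>l\<^sub>k) + \<theta>\<^sub>l\<^sub>k\<close>, one angle from each sum,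
  and \<open>1 - cos (a\<^sub>1 + \<dots> + a\<^sub>4) \<le> 4 \<Sum> (1 - cos a\<^sub>r)\<close>. Summing over \<open>l, k\<close> and using the symmetry
  of the deficits bounds the total deficit below by \<open>(n-1)\<^sup>2 (1 - cos \<theta>\<^sub>i\<^sub>j) / 16\<close>, which is at
  least \<open>(n-1)\<^sup>2 \<theta>\<^sub>i\<^sub>j\<^sup>2 / 288\<close>. Hence \<open>\<Phi> \<le> 1 - \<theta>\<^sub>i\<^sub>j\<^sup>2 / (72 n\<^sup>2)\<close>.\<close>

lemma abs_sin_add_le: "\<bar>sin (x + y)\<bar> \<le> \<bar>sin x\<bar> + \<bar>sin (y::real)\<bar>"
proof -
  have "\<bar>sin x * cos y\<bar> \<le> \<bar>sin x\<bar>" "\<bar>cos x * sin y\<bar> \<le> \<bar>sin y\<bar>"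
    by (simp_all add: abs_mult mult_left_le mult_left_le_one_le)
  then show ?thesis by (simp add: sin_add)
qed

lemma abs_sin_sum_le: "\<bar>sin (\<Sum>i\<in>A. x i)\<bar> \<le> (\<Sum>i\<in>A. \<bar>sin (x i :: real)\<bar>)"
proof (induction A rule: infinite_finite_induct)
  case (insert a A)
  then show ?case using abs_sin_add_le[of "x a" "sum x A"] by simp
qed simp_all

lemma one_minus_cos_eq: "1 - cos x = 2 * sin (x / 2) ^ 2" for x :: real
  using cos_double_sin[of "x / 2"] by simp

lemma one_minus_cos_sum_le:
  "1 - cos (\<Sum>i\<in>A. x i) \<le> card A * (\<Sum>i\<in>A. 1 - cos (x i :: real))"
proof -
  have "sin ((\<Sum>i\<in>A. x i) / 2) ^ 2 \<le> (\<Sum>i\<in>A. \<bar>sin (x i / 2)\<bar>) ^ 2"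
    using abs_sin_sum_le[of "\<lambda>i. x i / 2" A]
    by (metis abs_ge_zero power2_abs power_mono sum_divide_distrib)
  also have "\<dots> \<le> card A * (\<Sum>i\<in>A. sin (x i / 2) ^ 2)"
    using sum_squared_le_sum_of_squares[of "\<lambda>i. \<bar>sin (x i / 2)\<bar>" A] by (simp add: mult.commute)
  finally show ?thesis
    by (simp add: one_minus_cos_eq flip: sum_distrib_left)
qed

lemma one_minus_cos_add4_le:
  "1 - cos (a + b + c + d)
     \<le> 4 * ((1 - cos a) + (1 - cos b) + (1 - cos c) + (1 - cos (d :: real)))"
  using one_minus_cos_sum_le[of "\<lambda>i. [a, b, c, d] ! i" "{0, 1, 2, 3}"] by (simp add: add.assoc)

lemma square_div_18_le_one_minus_cos:
  assumes "\<bar>t\<bar> \<le> pi"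
  shows "t ^ 2 / 18 \<le> 1 - cos t"
proof -
  define s where "s = t / 2"
  have "\<bar>s\<bar> \<le> 2" using assms pi_less_4 unfolding s_def by auto
  then have s_sq: "s ^ 2 \<le> 4" using abs_le_square_iff[of s 2] by simp
  have "\<bar>sin s - s\<bar> \<le> \<bar>s\<bar> ^ 3 / 6"
    using Maclaurin_sin_bound[of s 3] by (simp add: numeral_3_eq_3 sin_coeff_def)
  also have "\<dots> = \<bar>s\<bar> * s ^ 2 / 6" by (simp add: power3_eq_cube power2_eq_square)
  also have "\<dots> \<le> \<bar>s\<bar> * 4 / 6" using s_sq by (intro divide_right_mono mult_left_mono) auto
  finally have "\<bar>s\<bar> / 3 \<le> \<bar>sin s\<bar>" by linarith
  then have "s ^ 2 / 9 \<le> sin s ^ 2"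
    using power_mono[of "\<bar>s\<bar> / 3" "\<bar>sin s\<bar>" 2] by (simp add: power_divide)
  moreover have "1 - cos t = 2 * sin s ^ 2" "t ^ 2 = 4 * s ^ 2"
    unfolding s_def by (simp_all add: one_minus_cos_eq power_divide)
  ultimately show ?thesis by linarith
qed

lemma cos_diff_commute: "cos (x - y) = cos (y - x :: real)"
  by (metis cos_minus minus_diff_eq)

lemma sum_symmetric_eq_twice_lower:
  fixes f :: "nat \<Rightarrow> nat \<Rightarrow> 'a::comm_semiring_1"
  assumes "\<And>a b. f a b = f b a" and "\<And>a. f a a = 0"
  shows "(\<Sum>i\<in>{1..<n}. \<Sum>l\<in>{1..<n}. f i l) = 2 * (\<Sum>i\<in>{1..<n}. \<Sum>l\<in>{1..<i}. f i l)"
proof (induction n)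
  case (Suc n)
  show ?case
  proof (cases "n = 0")
    case False
    then have split: "{1..<Suc n} = insert n {1..<n}" by auto
    have "(\<Sum>i\<in>{1..<n}. f i n) = (\<Sum>l\<in>{1..<n}. f n l)"
      using assms(1) by (intro sum.cong) auto
    then show ?thesis
      using Suc assms(2)[of n] by (simp add: split sum.distrib algebra_simps mult_2)
  qed simp
qed simp

lemma sum_pred_add_eq_choose_two: "(\<Sum>i\<in>{1..<n}. i - 1) + (n - 1) = n choose 2"
proof (induction n)
  case (Suc n)
  have "Suc n choose 2 = n + (n choose 2)"
    by (simp add: numeral_2_eq_2)
  with Suc show ?case
    by (cases "n = 0") (auto simp: atLeastLessThanSuc)
qed simp

definition DG_deficit :: "nat \<Rightarrow> (nat \<Rightarrow> nat \<Rightarrow> real) \<Rightarrow> real" where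
  "DG_deficit n \<theta> =
     (\<Sum>i\<in>{1..<n}. \<Sum>l\<in>{1..<i}. \<Sum>j\<in>{1..<n}. \<Sum>k\<in>{1..<j}.
          1 - cos (\<theta> i j - \<theta> i k - \<theta> l j + \<theta> l k))
    + (\<Sum>i\<in>{1..<n}. \<Sum>l\<in>{1..<i}. \<Sum>j\<in>{1..<n}. 1 - cos (\<theta> i j - \<theta> l j))
    + (\<Sum>j\<in>{1..<n}. \<Sum>k\<in>{1..<j}. \<Sum>i\<in>{1..<n}. 1 - cos (\<theta> i j - \<theta> i k))
    + (\<Sum>i\<in>{1..<n}. \<Sum>j\<in>{1..<n}. 1 - cos (\<theta> i j))"

lemma DG_Phi_eq_one_minus_deficit:
  assumes "n \<ge> 2"
  shows "DG_Phi n \<theta> = 1 - DG_deficit n \<theta> / real (n choose 2) ^ 2"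
proof -
  define I where "I = {1..<n}"
  define P where "P = (\<Sum>i\<in>I. real (i - 1))"
  define m where "m = real (n - 1)"
  define S\<^sub>1 where "S\<^sub>1 =
    (\<Sum>i\<in>I. \<Sum>l\<in>{1..<i}. \<Sum>j\<in>I. \<Sum>k\<in>{1..<j}. cos (\<theta> i j - \<theta> i k - \<theta> l j + \<theta> l k))"
  define S\<^sub>2 where "S\<^sub>2 = (\<Sum>i\<in>I. \<Sum>l\<in>{1..<i}. \<Sum>j\<in>I. cos (\<theta> i j - \<theta> l j))"
  define S\<^sub>3 where "S\<^sub>3 = (\<Sum>j\<in>I. \<Sum>k\<in>{1..<j}. \<Sum>i\<in>I. cos (\<theta> i j - \<theta> i k))"
  define S\<^sub>4 where "S\<^sub>4 = (\<Sum>i\<in>I. \<Sum>j\<in>I. cos (\<theta> i j))"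
  have card_I: "card I = n - 1" unfolding I_def by simp
  have "DG_deficit n \<theta> = (P * P - S\<^sub>1) + (P * m - S\<^sub>2) + (P * m - S\<^sub>3) + (m * m - S\<^sub>4)"
    unfolding DG_deficit_def I_def[symmetric] S\<^sub>1_def S\<^sub>2_def S\<^sub>3_def S\<^sub>4_def P_def m_def
    by (simp add: sum_subtractf sum_distrib_left sum_distrib_right card_I mult.commute)
  moreover have "real (n choose 2) = P + m"
    unfolding P_def m_def I_def using sum_pred_add_eq_choose_two[of n]
    by (metis of_nat_add of_nat_sum)
  ultimately have "DG_deficit n \<theta> = real (n choose 2) ^ 2 - (S\<^sub>1 + S\<^sub>2 + S\<^sub>3 + S\<^sub>4)"
    by (simp add: power2_eq_square algebra_simps)
  moreover have "DG_Phi n \<theta> = (S\<^sub>1 + S\<^sub>2 + S\<^sub>3 + S\<^sub>4) / real (n choose 2) ^ 2"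
    unfolding DG_Phi_def I_def[symmetric] S\<^sub>1_def S\<^sub>2_def S\<^sub>3_def S\<^sub>4_def by simp
  moreover have "real (n choose 2) \<noteq> 0" using assms by simp
  ultimately show ?thesis
    by (simp add: field_simps)
qed

lemma full_deficit_sums_le_DG_deficit:
  "(\<Sum>i\<in>{1..<n}. \<Sum>l\<in>{1..<n}. \<Sum>j\<in>{1..<n}. \<Sum>k\<in>{1..<n}.
        1 - cos (\<theta> i j - \<theta> i k - \<theta> l j + \<theta> l k))
   + (\<Sum>i\<in>{1..<n}. \<Sum>l\<in>{1..<n}. \<Sum>j\<in>{1..<n}. 1 - cos (\<theta> i j - \<theta> l j))
   + (\<Sum>j\<in>{1..<n}. \<Sum>k\<in>{1..<n}. \<Sum>i\<in>{1..<n}. 1 - cos (\<theta> i j - \<theta> i k))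
   + (\<Sum>i\<in>{1..<n}. \<Sum>j\<in>{1..<n}. 1 - cos (\<theta> i j))
   \<le> 4 * DG_deficit n \<theta>"
proof -
  define I where "I = {1..<n}"
  define F where "F i l j k = 1 - cos (\<theta> i j - \<theta> i k - \<theta> l j + \<theta> l k)" for i l j k
  define G where "G i l j = 1 - cos (\<theta> i j - \<theta> l j)" for i l j
  define H where "H j k i = 1 - cos (\<theta> i j - \<theta> i k)" for j k i
  have F_swap_cols: "F i l j k = F i l k j" for i l j k
    unfolding F_def using cos_diff_commute[of "\<theta> i j - \<theta> l j" "\<theta> i k - \<theta> l k"]
    by (simp add: algebra_simps)
  have F_swap_rows: "F i l j k = F l i j k" for i l j k
    unfolding F_def using cos_diff_commute[of "\<theta> i j - \<theta> i k" "\<theta> l j - \<theta> l k"]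
    by (simp add: algebra_simps)
  have "(\<Sum>i\<in>I. \<Sum>l\<in>I. \<Sum>j\<in>I. \<Sum>k\<in>I. F i l j k)
      = 2 * (\<Sum>i\<in>I. \<Sum>l\<in>I. \<Sum>j\<in>I. \<Sum>k\<in>{1..<j}. F i l j k)"
  proof -
    have "(\<Sum>j\<in>I. \<Sum>k\<in>I. F i l j k) = 2 * (\<Sum>j\<in>I. \<Sum>k\<in>{1..<j}. F i l j k)" for i l
      unfolding I_def by (rule sum_symmetric_eq_twice_lower) (rule F_swap_cols, simp add: F_def)
    then show ?thesis by (simp add: sum_distrib_left)
  qed
  also have "\<dots> = 4 * (\<Sum>i\<in>I. \<Sum>l\<in>{1..<i}. \<Sum>j\<in>I. \<Sum>k\<in>{1..<j}. F i l j k)"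
    unfolding I_def
    by (subst sum_symmetric_eq_twice_lower) (use F_swap_rows in \<open>simp_all add: F_def\<close>)
  finally have full_F: "(\<Sum>i\<in>I. \<Sum>l\<in>I. \<Sum>j\<in>I. \<Sum>k\<in>I. F i l j k)
      = 4 * (\<Sum>i\<in>I. \<Sum>l\<in>{1..<i}. \<Sum>j\<in>I. \<Sum>k\<in>{1..<j}. F i l j k)" .
  have full_G: "(\<Sum>i\<in>I. \<Sum>l\<in>I. \<Sum>j\<in>I. G i l j) = 2 * (\<Sum>i\<in>I. \<Sum>l\<in>{1..<i}. \<Sum>j\<in>I. G i l j)"
    unfolding I_def G_def by (rule sum_symmetric_eq_twice_lower) (simp_all add: cos_diff_commute)
  have full_H: "(\<Sum>j\<in>I. \<Sum>k\<in>I. \<Sum>i\<in>I. H j k i) = 2 * (\<Sum>j\<in>I. \<Sum>k\<in>{1..<j}. \<Sum>i\<in>I. H j k i)"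
    unfolding I_def H_def by (rule sum_symmetric_eq_twice_lower) (simp_all add: cos_diff_commute)
  have "0 \<le> (\<Sum>i\<in>I. \<Sum>l\<in>{1..<i}. \<Sum>j\<in>I. G i l j)"
    "0 \<le> (\<Sum>j\<in>I. \<Sum>k\<in>{1..<j}. \<Sum>i\<in>I. H j k i)"
    "0 \<le> (\<Sum>i\<in>I. \<Sum>j\<in>I. 1 - cos (\<theta> i j))"
    unfolding G_def H_def by (simp_all add: sum_nonneg)
  with full_F full_G full_H show ?thesis
    unfolding DG_deficit_def F_def G_def H_def I_def by argo
qed

lemma DG_deficit_ge_one_minus_cos:
  assumes i0: "i0 \<in> {1..<n}" and j0: "j0 \<in> {1..<n}"
  shows "real (n - 1) ^ 2 * (1 - cos (\<theta> i0 j0)) \<le> 16 * DG_deficit n \<theta>"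
proof -
  define I where "I = {1..<n}"
  define F where "F i l j k = 1 - cos (\<theta> i j - \<theta> i k - \<theta> l j + \<theta> l k)" for i l j k
  define G where "G i l j = 1 - cos (\<theta> i j - \<theta> l j)" for i l j
  define H where "H j k i = 1 - cos (\<theta> i j - \<theta> i k)" for j k i
  define K where "K i j = 1 - cos (\<theta> i j)" for i j
  have pointwise: "1 - cos (\<theta> i0 j0) \<le> 4 * (F i0 l j0 k + G i0 l k + H j0 k l + K l k)" for l k
    using one_minus_cos_add4_le[of "\<theta> i0 j0 - \<theta> i0 k - \<theta> l j0 + \<theta> l k"
        "\<theta> i0 k - \<theta> l k" "\<theta> l j0 - \<theta> l k" "\<theta> l k"]
    unfolding F_def G_def H_def K_def by simp
  have "real (n - 1) ^ 2 * (1 - cos (\<theta> i0 j0)) = (\<Sum>l\<in>I. \<Sum>k\<in>I. 1 - cos (\<theta> i0 j0))"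
    using i0 unfolding I_def by (simp add: power2_eq_square of_nat_diff)
  also have "\<dots> \<le> (\<Sum>l\<in>I. \<Sum>k\<in>I. 4 * (F i0 l j0 k + G i0 l k + H j0 k l + K l k))"
    by (intro sum_mono pointwise)
  also have "\<dots> = 4 * ((\<Sum>l\<in>I. \<Sum>k\<in>I. F i0 l j0 k) + (\<Sum>l\<in>I. \<Sum>k\<in>I. G i0 l k)
      + (\<Sum>l\<in>I. \<Sum>k\<in>I. H j0 k l) + (\<Sum>l\<in>I. \<Sum>k\<in>I. K l k))"
    by (simp add: sum.distrib sum_distrib_left)
  also have "\<dots> \<le> 4 * ((\<Sum>i\<in>I. \<Sum>l\<in>I. \<Sum>j\<in>I. \<Sum>k\<in>I. F i l j k) + (\<Sum>i\<in>I. \<Sum>l\<in>I. \<Sum>j\<in>I. G i l j)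
      + (\<Sum>j\<in>I. \<Sum>k\<in>I. \<Sum>i\<in>I. H j k i) + (\<Sum>i\<in>I. \<Sum>j\<in>I. K i j))"
  proof -
    have "(\<Sum>l\<in>I. \<Sum>k\<in>I. F i0 l j0 k) \<le> (\<Sum>i\<in>I. \<Sum>l\<in>I. \<Sum>j\<in>I. \<Sum>k\<in>I. F i l j k)"
    proof -
      have "(\<Sum>l\<in>I. \<Sum>k\<in>I. F i0 l j0 k) \<le> (\<Sum>l\<in>I. \<Sum>j\<in>I. \<Sum>k\<in>I. F i0 l j k)"
      proof (rule sum_mono)
        fix l
        show "(\<Sum>k\<in>I. F i0 l j0 k) \<le> (\<Sum>j\<in>I. \<Sum>k\<in>I. F i0 l j k)"
          by (rule member_le_sum[where f = "\<lambda>j. \<Sum>k\<in>I. F i0 l j k"])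
            (use j0 in \<open>auto simp: I_def F_def intro: sum_nonneg\<close>)
      qed
      also have "\<dots> \<le> (\<Sum>i\<in>I. \<Sum>l\<in>I. \<Sum>j\<in>I. \<Sum>k\<in>I. F i l j k)"
        using i0 unfolding I_def F_def by (intro member_le_sum) (auto intro!: sum_nonneg)
      finally show ?thesis .
    qed
    moreover have "(\<Sum>l\<in>I. \<Sum>k\<in>I. G i0 l k) \<le> (\<Sum>i\<in>I. \<Sum>l\<in>I. \<Sum>j\<in>I. G i l j)"
      using i0 unfolding I_def G_def by (intro member_le_sum) (auto intro!: sum_nonneg)
    moreover have "(\<Sum>l\<in>I. \<Sum>k\<in>I. H j0 k l) \<le> (\<Sum>j\<in>I. \<Sum>k\<in>I. \<Sum>i\<in>I. H j k i)"
      unfolding sum.swap[of "\<lambda>l k. H j0 k l"] using j0 unfolding I_def H_def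
      by (intro member_le_sum) (auto intro!: sum_nonneg)
    ultimately show ?thesis by argo
  qed
  also have "\<dots> \<le> 16 * DG_deficit n \<theta>"
    using full_deficit_sums_le_DG_deficit[of \<theta> n] unfolding I_def F_def G_def H_def K_def by argo
  finally show ?thesis .
qed

lemma DG_Phi_le_one_minus_square_entry:
  assumes n: "n \<ge> 2" and i0: "i0 \<in> {1..<n}" and j0: "j0 \<in> {1..<n}" and bound: "\<bar>\<theta> i0 j0\<bar> \<le> pi"
  shows "DG_Phi n \<theta> \<le> 1 - \<theta> i0 j0 ^ 2 / (72 * real n ^ 2)"
proof -
  define c where "c = real (n - 1)"
  have c_pos: "c > 0" using n unfolding c_def by simp
  have "c ^ 2 * (\<theta> i0 j0 ^ 2 / 18) \<le> 16 * DG_deficit n \<theta>"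
    using DG_deficit_ge_one_minus_cos[OF i0 j0] square_div_18_le_one_minus_cos[OF bound]
    unfolding c_def by (meson mult_left_mono order_trans zero_le_power2)
  then have deficit: "c ^ 2 * \<theta> i0 j0 ^ 2 / 288 \<le> DG_deficit n \<theta>" by simp
  have choose: "real (n choose 2) = real n * c / 2"
    using n unfolding choose_two c_def by (simp add: real_of_nat_div of_nat_diff)
  have "\<theta> i0 j0 ^ 2 / (72 * real n ^ 2) = (c ^ 2 * \<theta> i0 j0 ^ 2 / 288) / real (n choose 2) ^ 2"
    unfolding choose using n c_pos by (simp add: power_mult_distrib power_divide field_simps)
  also have "\<dots> \<le> DG_deficit n \<theta> / real (n choose 2) ^ 2"
    by (rule divide_right_mono[OF deficit]) simp
  finally show ?thesis using DG_Phi_eq_one_minus_deficit[OF n] by simp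
qed

theorem mainTheorem12:
  shows "\<exists>n0 q0::nat. \<forall>n q \<theta>. n \<ge> 2 \<and> n \<ge> n0 \<and> q \<ge> q0 \<and>
      (\<forall>i\<in>{1..<n}. \<forall>j\<in>{1..<n}. - pi \<le> \<theta> i j \<and> \<theta> i j \<le> pi) \<and>
      (\<exists>i\<in>{1..<n}. \<exists>j\<in>{1..<n}. \<bar>\<theta> i j\<bar> > 1 / sqrt (real q))
      \<longrightarrow> DG_Phi n \<theta> \<le> 1 - 1 / (400 * (real n)^2 * real q)"
proof -
  have "DG_Phi n \<theta> \<le> 1 - 1 / (400 * real n ^ 2 * real q)"
    if n: "n \<ge> 2" and q: "q \<ge> 1"
      and bounds: "\<forall>i\<in>{1..<n}. \<forall>j\<in>{1..<n}. - pi \<le> \<theta> i j \<and> \<theta> i j \<le> pi"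
      and large_entry: "\<exists>i\<in>{1..<n}. \<exists>j\<in>{1..<n}. \<bar>\<theta> i j\<bar> > 1 / sqrt (real q)"
    for n q :: nat and \<theta> :: "nat \<Rightarrow> nat \<Rightarrow> real"
  proof -
    obtain i0 j0 where i0: "i0 \<in> {1..<n}" and j0: "j0 \<in> {1..<n}"
      and large: "1 / sqrt (real q) < \<bar>\<theta> i0 j0\<bar>" using large_entry by blast
    have "1 / real q < \<theta> i0 j0 ^ 2"
      using power_strict_mono[OF large, of 2] q by (simp add: power_divide)
    then have gap: "1 / (400 * real n ^ 2 * real q) \<le> \<theta> i0 j0 ^ 2 / (72 * real n ^ 2)"
      using n q by (simp add: field_simps)
    have "\<bar>\<theta> i0 j0\<bar> \<le> pi" using bounds i0 j0 by fastforce
    then have "DG_Phi n \<theta> \<le> 1 - \<theta> i0 j0 ^ 2 / (72 * real n ^ 2)"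
      by (rule DG_Phi_le_one_minus_square_entry[OF n i0 j0])
    with gap show ?thesis by linarith
  qed
  then show ?thesis by (intro exI[of _ 0] exI[of _ 1]) blast
qed

end
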